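(* Let $\gamma$ be a Jordan curve in $\mathbb{R}^2$ and $D$ an open disk with $D\subset\operatorname{Int}\gamma$. Suppose $a,b$ are distinct points of $\gamma$ with $\gamma[a,b]\cap\overline{D}=\{a,b\}$. Then $D\subset\operatorname{Ext}(\gamma[a,b]\cup\partial D[a,b])$ (i.e. $\gamma$ winds positively around $D$ from $a$ to $b$), and $D\subset\operatorname{Int}(\gamma[a,b]\cup\partial D[b,a])$.
   Context: For a Jordan curve $\gamma$, $\operatorname{Int}\gamma$ and $\operatorname{Ext}\gamma$ are the bounded and unbounded components of $\mathbb{R}^2\setminus\gamma$. A parametrization of a Jordan curve is positively oriented if its argument variation around every point of its interior equals $2\pi$ (for circles: counterclockwise). For distinct $a,b$ on a Jordan curve $\gamma$, $\gamma[a,b]$ denotes the closed subarc traversed from $a$ to $b$ along the positive orientation; this notation applies also to the circle $\partial D$. *)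

theory Defs
  imports "HOL-Complex_Analysis.Complex_Analysis"
begin

text \<open>The plane R^2 is identified with the complex plane. A Jordan curve is given by
a parametrization g on [0,1] that is a simple closed path.\<close>

definition jordan_curve :: "(real \<Rightarrow> complex) \<Rightarrow> bool" where
  "jordan_curve g \<longleftrightarrow> simple_path g \<and> pathfinish g = pathstart g"

definition positively_oriented :: "(real \<Rightarrow> complex) \<Rightarrow> bool" where
  "positively_oriented g \<longleftrightarrow> (\<forall>z \<in> inside (path_image g). winding_number g z = 1)"

definition subarc :: "(real \<Rightarrow> complex) \<Rightarrow> complex \<Rightarrow> complex \<Rightarrow> complex set" where
  "subarc g a b =
     (let s = (THE s. s \<in> {0..<1} \<and> g s = a);
          t = (THE t. t \<in> {0..<1} \<and> g t = b)
      in if s \<le> t then g ` {s..t} else g ` ({s..1} \<union> {0..t}))"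

end

theory Submission
  imports Defs
begin

text \<open>Cut \<gamma> at a and b into the arc P = \<gamma>[a,b] and the complementary arc R, and cut the
circle likewise into \<alpha> = \<partial>D[a,b] and \<beta> = \<partial>D[b,a]. Replacing R by \<alpha> (reversed) or by \<beta>
gives Jordan curves C1 = P \<union> \<alpha> and C2 = P \<union> \<beta>. Both are positively oriented: the new
arc lies in the closure of Int \<gamma>, so near a point of P off the new arc the winding numbers of
\<gamma> and of Ci agree at points of Int Ci. At the centre c of D the winding numbers differ by
that of the circle, 1; as each is 0 or 1, c lies outside C1 and inside C2, and so does the
connected set D, which misses both curves.\<close>

lemma closed_path_image_param:
  assumes "pathfinish h = pathstart h" "x \<in> path_image h"
  obtains s where "s \<in> {0..<1}" "h s = x"
proof -
  obtain s where s: "s \<in> {0..1}" "h s = x"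
    using assms(2) unfolding path_image_def by auto
  show ?thesis
  proof (cases "s = 1")
    case True
    then show ?thesis using that[of 0] assms(1) s by (simp add: pathfinish_def pathstart_def)
  next
    case False
    with s show ?thesis by (intro that[of s]) auto
  qed
qed

lemma subarc_simple_path:
  assumes "simple_path h" "s \<in> {0..<1}" "t \<in> {0..<1}"
  shows "subarc h (h s) (h t) = (if s \<le> t then h ` {s..t} else h ` ({s..1} \<union> {0..t}))"
proof -
  have "(THE x. x \<in> {0..<1} \<and> h x = h u) = u" if "u \<in> {0..<1}" for u
  proof (rule the_equality)
    show "x = u" if "x \<in> {0..<1} \<and> h x = h u" for x
      using that \<open>u \<in> {0..<1}\<close> assms(1) unfolding simple_path_def loop_free_def by fastforce
  qed (use that in auto)
  then show ?thesis
    unfolding subarc_def Let_def using assms(2,3) by simp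
qed

lemma shiftpath_image_lower:
  assumes "0 \<le> x" "y \<le> 1 - s"
  shows "shiftpath s h ` {x..y} = h ` {x + s..y + s}"
proof -
  have "shiftpath s h ` {x..y} = h ` plus s ` {x..y}"
    unfolding image_image using assms by (intro image_cong) (auto simp: shiftpath_def add.commute)
  then show ?thesis by simp
qed

lemma shiftpath_image_upper:
  assumes "pathfinish h = pathstart h" "1 - s \<le> x" "y \<le> 1"
  shows "shiftpath s h ` {x..y} = h ` {x + (s - 1)..y + (s - 1)}"
proof -
  have "h 1 = h 0"
    using assms(1) by (simp add: pathfinish_def pathstart_def)
  then have "shiftpath s h v = h (s - 1 + v)" if "1 - s \<le> v" for v
    using that by (cases "s + v = 1") (auto simp: shiftpath_def algebra_simps)
  then have "shiftpath s h ` {x..y} = h ` plus (s - 1) ` {x..y}"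
    unfolding image_image using assms(2) by (intro image_cong) auto
  then show ?thesis by simp
qed

lemma shiftpath_image_subarcs:
  assumes "simple_path h" "pathfinish h = pathstart h" "s \<in> {0..<1}" "t \<in> {0..<1}" "s \<noteq> t"
  defines "u \<equiv> if s \<le> t then t - s else 1 + t - s"
  shows "shiftpath s h ` {0..u} = subarc h (h s) (h t)"
    and "shiftpath s h ` {u..1} = subarc h (h t) (h s)"
proof -
  note lower = shiftpath_image_lower[of _ _ s h] and upper = shiftpath_image_upper[OF assms(2)]
  have "shiftpath s h ` {0..u} = (if s \<le> t then h ` {s..t} else h ` ({s..1} \<union> {0..t}))
      \<and> shiftpath s h ` {u..1} = (if t \<le> s then h ` {t..s} else h ` ({t..1} \<union> {0..s}))"
  proof (cases "s \<le> t")
    case True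
    then have "{u..1} = {u..1 - s} \<union> {1 - s..1}"
      using assms(3,4) by (intro ivl_disj_un_two_touch(4)[symmetric]) (auto simp: u_def)
    then show ?thesis
      using True assms(3-5) by (simp add: u_def image_Un lower upper)
  next
    case False
    then have "{0..u} = {0..1 - s} \<union> {1 - s..u}"
      using assms(3,4) by (intro ivl_disj_un_two_touch(4)[symmetric]) (auto simp: u_def)
    then show ?thesis
      using False assms(3-5) by (simp add: u_def image_Un lower upper)
  qed
  then show "shiftpath s h ` {0..u} = subarc h (h s) (h t)"
    and "shiftpath s h ` {u..1} = subarc h (h t) (h s)"
    using subarc_simple_path[OF assms(1)] assms(3,4) by auto
qed

lemma simple_loop_image_Int:
  assumes "simple_path k" "pathfinish k = pathstart k" "0 < u" "u < 1"
  shows "k ` {0..u} \<inter> k ` {u..1} = {k 0, k u}"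
proof
  show "k ` {0..u} \<inter> k ` {u..1} \<subseteq> {k 0, k u}"
  proof
    fix z assume "z \<in> k ` {0..u} \<inter> k ` {u..1}"
    then obtain x y where xy: "x \<in> {0..u}" "y \<in> {u..1}" "z = k x" "k x = k y"
      by auto
    then have "x = y \<or> x = 0 \<and> y = 1"
      using assms(1,3,4) unfolding simple_path_def loop_free_def by fastforce
    with xy show "z \<in> {k 0, k u}" by auto
  qed
  have "k 0 = k 1"
    using assms(2) by (simp add: pathfinish_def pathstart_def)
  moreover have "0 \<in> {0..u}" "u \<in> {0..u}" "u \<in> {u..1}" "1 \<in> {u..1}"
    using assms(3,4) by auto
  ultimately show "{k 0, k u} \<subseteq> k ` {0..u} \<inter> k ` {u..1}"
    by (metis image_eqI empty_subsetI insert_subset IntI)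
qed

definition arc_decomposition :: "(real \<Rightarrow> complex) \<Rightarrow> (real \<Rightarrow> complex) \<Rightarrow> (real \<Rightarrow> complex) \<Rightarrow> bool" where
  "arc_decomposition g P R \<longleftrightarrow>
     arc P \<and> arc R \<and> pathstart R = pathfinish P \<and> pathfinish R = pathstart P \<and>
     path_image P \<union> path_image R = path_image g \<and>
     path_image P \<inter> path_image R = {pathstart P, pathfinish P} \<and>
     (\<forall>z. z \<notin> path_image g \<longrightarrow> winding_number g z = winding_number P z + winding_number R z)"

lemma arc_decomposition_subpath:
  assumes "simple_path k" "pathfinish k = pathstart k" "0 < u" "u < 1"
  shows "arc_decomposition k (subpath 0 u k) (subpath u 1 k)"
  unfolding arc_decomposition_def
proof (intro conjI allI impI)
  have "k 0 \<noteq> k u" "k u \<noteq> k 1"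
    using assms(1,3,4) unfolding simple_path_def loop_free_def by force+
  then show "arc (subpath 0 u k)" "arc (subpath u 1 k)"
    using assms by (auto intro!: arc_simple_path_subpath)
  have "k ` {0..u} \<union> k ` {u..1} = path_image k"
    unfolding path_image_def image_Un[symmetric] using assms(3,4) by (simp add: ivl_disj_un_two_touch(4))
  then show "path_image (subpath 0 u k) \<union> path_image (subpath u 1 k) = path_image k"
    using assms(3,4) by (simp add: path_image_subpath)
  show "path_image (subpath 0 u k) \<inter> path_image (subpath u 1 k)
      = {pathstart (subpath 0 u k), pathfinish (subpath 0 u k)}"
    using simple_loop_image_Int[OF assms] assms(3,4) by (simp add: path_image_subpath)
  fix z assume "z \<notin> path_image k"
  then show "winding_number k z = winding_number (subpath 0 u k) z + winding_number (subpath u 1 k) z"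
    using assms by (subst winding_number_subpath_combine) (auto simp: simple_path_imp_path)
qed (use assms(2) in \<open>auto simp: pathstart_def pathfinish_def subpath_def\<close>)

lemma jordan_curve_split:
  assumes "jordan_curve h" "a \<in> path_image h" "b \<in> path_image h" "a \<noteq> b"
  obtains P R where "arc_decomposition h P R" "pathstart P = a" "pathfinish P = b"
    "path_image P = subarc h a b" "path_image R = subarc h b a"
proof -
  have h: "simple_path h" "pathfinish h = pathstart h"
    using assms(1) by (auto simp: jordan_curve_def)
  obtain s t where s: "s \<in> {0..<1}" "h s = a" and t: "t \<in> {0..<1}" "h t = b"
    using closed_path_image_param[OF h(2)] assms(2,3) by metis
  with assms(4) have "s \<noteq> t" by auto
  define k where "k = shiftpath s h"
  define u where "u = (if s \<le> t then t - s else 1 + t - s)"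
  have u: "0 < u" "u < 1"
    using s t \<open>s \<noteq> t\<close> by (auto simp: u_def)
  have k: "simple_path k" "pathfinish k = pathstart k" "path_image k = path_image h"
      "\<And>z. z \<notin> path_image h \<Longrightarrow> winding_number k z = winding_number h z"
    using s(1) h by (simp_all add: k_def simple_path_shiftpath path_image_shiftpath closed_shiftpath
        winding_number_shiftpath simple_path_imp_path)
  have "arc_decomposition h (subpath 0 u k) (subpath u 1 k)"
    using arc_decomposition_subpath[OF k(1,2) u] k(3,4) by (simp add: arc_decomposition_def)
  moreover have "k 0 = a" "k u = b"
    using s t h(2) by (auto simp: k_def u_def shiftpath_def pathstart_def pathfinish_def)
  moreover have "path_image (subpath 0 u k) = subarc h a b" "path_image (subpath u 1 k) = subarc h b a"
    using shiftpath_image_subarcs[OF h s(1) t(1) \<open>s \<noteq> t\<close>] s t u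
    by (simp_all add: k_def u_def path_image_subpath)
  ultimately show thesis
    by (intro that) auto
qed

lemma winding_number_join_arc_decomposition:
  assumes "arc_decomposition h \<alpha> \<beta>" "path P" "pathstart P = pathstart \<alpha>" "pathfinish P = pathfinish \<alpha>"
    and "z \<notin> path_image P" "z \<notin> path_image h"
  shows "winding_number (P +++ \<beta>) z = winding_number (P +++ reversepath \<alpha>) z + winding_number h z"
proof -
  have "arc \<alpha>" "arc \<beta>" "pathstart \<beta> = pathfinish \<alpha>" "z \<notin> path_image \<alpha>" "z \<notin> path_image \<beta>"
    and "winding_number h z = winding_number \<alpha> z + winding_number \<beta> z"
    using assms(1,6) unfolding arc_decomposition_def by auto
  with assms(2-5) show ?thesis
    by (simp add: winding_number_join winding_number_reversepath arc_imp_path algebra_simps)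
qed

lemma outside_subset_outside:
  fixes S T :: "'a::real_normed_vector set"
  assumes "S \<inter> outside T = {}"
  shows "outside T \<subseteq> outside S"
  using outside_Un_outside_Un[of S "{}" T] assms by simp

lemma closure_outside_imp_outside:
  fixes K T :: "'a::real_normed_vector set"
  assumes "closed K" "K \<inter> outside T = {}" "p \<in> closure (outside T)" "p \<notin> K"
  shows "p \<in> outside K"
proof -
  have "p \<in> closure (outside K)"
    using assms(2,3) closure_mono[OF outside_subset_outside] by blast
  then show ?thesis
    using closure_outside_subset[OF assms(1)] assms(4) by blast
qed

lemma cball_Int_outside:
  fixes S :: "'a::real_normed_vector set"
  assumes "closed S" "0 < r" "ball c r \<subseteq> inside S"
  shows "cball c r \<inter> outside S = {}"
proof -
  have "cball c r \<subseteq> closure (inside S)"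
    using closure_mono[OF assms(3)] assms(2) by simp
  then show ?thesis
    using closure_inside_subset[OF assms(1)] union_with_inside[of S] by blast
qed

lemma connected_disjoint_subset_inside_outside:
  assumes "connected T" "T \<inter> S = {}" "x \<in> T"
  shows "x \<in> inside S \<Longrightarrow> T \<subseteq> inside S" and "x \<in> outside S \<Longrightarrow> T \<subseteq> outside S"
proof -
  have "T \<subseteq> connected_component_set (- S) x"
    using assms by (intro connected_component_maximal) auto
  then show "x \<in> inside S \<Longrightarrow> T \<subseteq> inside S" "x \<in> outside S \<Longrightarrow> T \<subseteq> outside S"
    using inside_same_component outside_same_component by blast+
qed

lemma positively_oriented_winding_number:
  assumes "jordan_curve C" "positively_oriented C" "z \<notin> path_image C"
  shows "winding_number C z = (if z \<in> inside (path_image C) then 1 else 0)"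
proof (cases "z \<in> inside (path_image C)")
  case False
  with assms(3) have "z \<in> outside (path_image C)"
    by (simp add: outside_inside)
  with assms(1) False show ?thesis
    by (simp add: jordan_curve_def winding_number_zero_in_outside simple_path_imp_path)
qed (use assms(2) in \<open>simp add: positively_oriented_def\<close>)

lemma connected_subset_outside_inside_winding_number_step:
  assumes "jordan_curve C\<^sub>1" "positively_oriented C\<^sub>1" "jordan_curve C\<^sub>2" "positively_oriented C\<^sub>2"
    and "connected T" "T \<inter> path_image C\<^sub>1 = {}" "T \<inter> path_image C\<^sub>2 = {}" "z \<in> T"
    and "winding_number C\<^sub>2 z = winding_number C\<^sub>1 z + 1"
  shows "T \<subseteq> outside (path_image C\<^sub>1) \<and> T \<subseteq> inside (path_image C\<^sub>2)"
proof -
  have "z \<notin> path_image C\<^sub>1" "z \<notin> path_image C\<^sub>2"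
    using assms(6-8) by blast+
  with assms(1-4,9) have "z \<notin> inside (path_image C\<^sub>1)" "z \<in> inside (path_image C\<^sub>2)"
    by (auto simp: positively_oriented_winding_number split: if_splits)
  with \<open>z \<notin> path_image C\<^sub>1\<close> have "z \<in> outside (path_image C\<^sub>1)"
    by (simp add: outside_inside)
  with \<open>z \<in> inside (path_image C\<^sub>2)\<close> show ?thesis
    using connected_disjoint_subset_inside_outside[OF assms(5)] assms(6-8) by blast
qed

lemma jordan_curves_common_inside_point:
  fixes g C :: "real \<Rightarrow> complex"
  assumes "simple_path g" "pathfinish g = pathstart g" "simple_path C" "pathfinish C = pathstart C"
    and "path_image C \<inter> outside (path_image g) = {}"
    and "closed K" "K \<inter> outside (path_image g) = {}"
    and "p \<in> path_image g" "p \<in> path_image C" "p \<notin> K"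
  obtains z where "z \<in> inside (path_image C)" "z \<in> inside (path_image g)" "z \<in> outside K"
proof -
  define \<Gamma> where "\<Gamma> = path_image g"
  define S where "S = path_image C"
  note J\<Gamma> = Jordan_inside_outside[OF assms(1,2), folded \<Gamma>_def]
    and JS = Jordan_inside_outside[OF assms(3,4), folded S_def]
  have \<Gamma>: "\<Gamma> \<subseteq> closure (outside \<Gamma>)"
    using J\<Gamma> by (auto simp: frontier_def)
  have "p \<in> outside K"
    using closure_outside_imp_outside[OF assms(6,7)] assms(8,10) \<Gamma> \<Gamma>_def by blast
  moreover have "p \<in> closure (inside S)"
    using assms(9) JS S_def by (auto simp: frontier_def)
  ultimately obtain z where z: "z \<in> inside S" "z \<in> outside K"
    using open_Int_closure_eq_empty[OF open_outside[OF assms(6)], of "inside S"] by blast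
  have "outside \<Gamma> \<subseteq> outside S"
    using outside_subset_outside[of S \<Gamma>] assms(5) S_def \<Gamma>_def by blast
  then have "inside S \<inter> closure (outside \<Gamma>) = {}"
    using inside_Int_outside[of S] JS open_Int_closure_eq_empty[of "inside S" "outside \<Gamma>"] by blast
  then have "z \<in> inside \<Gamma>"
    using z(1) \<Gamma> closure_subset[of "outside \<Gamma>"] inside_Un_outside[of \<Gamma>] by blast
  with z show thesis
    using that S_def \<Gamma>_def by blast
qed

lemma positively_oriented_reroute:
  fixes g P Q R :: "real \<Rightarrow> complex"
  assumes g: "jordan_curve g" "positively_oriented g" and "arc_decomposition g P R"
    and Q: "arc Q" "pathstart Q = pathfinish P" "pathfinish Q = pathstart P"
      "path_image P \<inter> path_image Q \<subseteq> {pathstart P, pathfinish P}"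
      "path_image Q \<inter> outside (path_image g) = {}"
  shows "jordan_curve (P +++ Q)" and "positively_oriented (P +++ Q)"
proof -
  have P: "arc P" "pathstart R = pathfinish P" "pathfinish R = pathstart P" "path R"
    and PR: "path_image P \<union> path_image R = path_image g"
      "path_image P \<inter> path_image R = {pathstart P, pathfinish P}"
      "\<And>z. z \<notin> path_image g \<Longrightarrow> winding_number g z = winding_number P z + winding_number R z"
    using \<open>arc_decomposition g P R\<close> unfolding arc_decomposition_def by (auto simp: arc_imp_path)
  define K where "K = path_image R \<union> path_image Q"
  have C: "simple_path (P +++ Q)" "pathfinish (P +++ Q) = pathstart (P +++ Q)"
    using P(1) Q(1-4) by (auto intro!: simple_path_join_loop)
  then show "jordan_curve (P +++ Q)"
    by (simp add: jordan_curve_def)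
  have S: "path_image (P +++ Q) = path_image P \<union> path_image Q"
    using Q by (simp add: path_image_join)
  obtain p where p: "p \<in> path_image P" "p \<notin> K"
  proof
    show "P (1/2) \<in> path_image P"
      by (simp add: path_image_def)
    moreover have "P (1/2) \<notin> {pathstart P, pathfinish P}"
      using P(1) unfolding arc_def inj_on_def pathstart_def pathfinish_def by force
    ultimately show "P (1/2) \<notin> K"
      using PR(2) Q(4) unfolding K_def by blast
  qed
  have "simple_path g" "pathfinish g = pathstart g"
    using g(1) by (auto simp: jordan_curve_def)
  moreover have "path_image (P +++ Q) \<inter> outside (path_image g) = {}"
    using PR(1) Q(5) S outside_no_overlap[of "path_image g"] by blast
  moreover have "closed K"
    using P(4) Q(1) by (simp add: K_def closed_Un closed_path_image arc_imp_path)
  moreover have "K \<inter> outside (path_image g) = {}"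
    using PR(1) Q(5) outside_no_overlap[of "path_image g"] unfolding K_def by blast
  moreover have "p \<in> path_image g" "p \<in> path_image (P +++ Q)"
    using p(1) PR(1) S by blast+
  ultimately obtain z where z: "z \<in> inside (path_image (P +++ Q))" "z \<in> inside (path_image g)"
      "z \<in> outside K"
    by (rule jordan_curves_common_inside_point[OF _ _ C _ _ _ _ _ p(2)])
  txt \<open>The loop R followed by Q reversed has winding number 0 at z, and off the curves it
    accounts for the difference of the winding numbers of g and of P +++ Q.\<close>
  have "winding_number g z = 1"
    using z(2) g(2) by (simp add: positively_oriented_def)
  moreover have "winding_number (R +++ reversepath Q) z = 0"
    using z(3) P(2-4) Q(1-3) winding_number_zero_in_outside[of "R +++ reversepath Q"]
    by (simp add: K_def path_image_join arc_imp_path)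
  moreover have "z \<notin> path_image P" "z \<notin> K"
    using z(1,3) inside_no_overlap[of "path_image (P +++ Q)"] outside_no_overlap[of K] S by blast+
  moreover from this have "z \<notin> path_image g"
    using PR(1) unfolding K_def by blast
  ultimately have "winding_number (P +++ Q) z = 1"
    using P Q(1-3) PR(3)[of z] by (simp add: K_def winding_number_join winding_number_reversepath arc_imp_path)
  then show "positively_oriented (P +++ Q)"
    using simple_closed_path_winding_number_inside[OF C(1)] z(1) unfolding positively_oriented_def by force
qed

lemma rerouted_curves_outside_inside:
  assumes "jordan_curve g" "positively_oriented g" "arc_decomposition g P R"
    and "arc_decomposition h \<alpha> \<beta>" "pathstart \<alpha> = pathstart P" "pathfinish \<alpha> = pathfinish P"
    and "path_image P \<inter> path_image h \<subseteq> {pathstart P, pathfinish P}"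
    and "path_image h \<inter> outside (path_image g) = {}"
    and "connected T" "T \<inter> (path_image P \<union> path_image h) = {}" "z \<in> T" "winding_number h z = 1"
  shows "T \<subseteq> outside (path_image P \<union> path_image \<alpha>) \<and> T \<subseteq> inside (path_image P \<union> path_image \<beta>)"
proof -
  have "arc \<alpha>" "arc \<beta>" "pathstart \<beta> = pathfinish \<alpha>" "pathfinish \<beta> = pathstart \<alpha>"
    and "path_image \<alpha> \<subseteq> path_image h" "path_image \<beta> \<subseteq> path_image h"
    using assms(4) unfolding arc_decomposition_def by auto
  note \<alpha>\<beta> = this assms(5-8)
  have C: "jordan_curve (P +++ reversepath \<alpha>)" "positively_oriented (P +++ reversepath \<alpha>)"
      "jordan_curve (P +++ \<beta>)" "positively_oriented (P +++ \<beta>)"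
    by (rule positively_oriented_reroute[OF assms(1-3)]; use \<alpha>\<beta> in \<open>auto simp: arc_reversepath\<close>)+
  have images: "path_image (P +++ reversepath \<alpha>) = path_image P \<union> path_image \<alpha>"
      "path_image (P +++ \<beta>) = path_image P \<union> path_image \<beta>"
    using \<alpha>\<beta> by (simp_all add: path_image_join)
  with assms(10) \<alpha>\<beta>(5,6) have disjoint: "T \<inter> path_image (P +++ reversepath \<alpha>) = {}"
      "T \<inter> path_image (P +++ \<beta>) = {}"
    by auto
  have "winding_number (P +++ \<beta>) z = winding_number (P +++ reversepath \<alpha>) z + 1"
    using winding_number_join_arc_decomposition[OF assms(4), of P z] assms(3,5,6,10-12)
    by (auto simp: arc_decomposition_def arc_imp_path)
  then have "T \<subseteq> outside (path_image (P +++ reversepath \<alpha>)) \<and> T \<subseteq> inside (path_image (P +++ \<beta>))"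
    by (rule connected_subset_outside_inside_winding_number_step[OF C assms(9) disjoint assms(11)])
  with images show ?thesis
    by simp
qed

theorem lemma4:
  fixes g :: "real \<Rightarrow> complex" and c :: complex and r :: real and a b :: complex
  assumes "jordan_curve g"
    and "positively_oriented g"
    and "r > 0"
    and "ball c r \<subseteq> inside (path_image g)"
    and "a \<in> path_image g" and "b \<in> path_image g" and "a \<noteq> b"
    and "subarc g a b \<inter> cball c r = {a, b}"
  shows "ball c r \<subseteq> outside (subarc g a b \<union> subarc (circlepath c r) a b) \<and>
         ball c r \<subseteq> inside (subarc g a b \<union> subarc (circlepath c r) b a)"
proof -
  have ball_disjoint: "ball c r \<inter> path_image g = {}"
    using assms(4) inside_no_overlap[of "path_image g"] by blast
  have "{a, b} \<subseteq> cball c r - ball c r"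
    using ball_disjoint assms(5,6,8) by blast
  then have ab: "a \<in> sphere c r" "b \<in> sphere c r"
    by auto
  obtain P R where P: "arc_decomposition g P R" "pathstart P = a" "pathfinish P = b"
      "path_image P = subarc g a b"
    using jordan_curve_split[OF assms(1,5,6,7)] by metis
  have circle: "jordan_curve (circlepath c r)" "path_image (circlepath c r) = sphere c r"
    using assms(3) by (auto simp: jordan_curve_def simple_path_circlepath)
  obtain \<alpha> \<beta> where \<alpha>\<beta>: "arc_decomposition (circlepath c r) \<alpha> \<beta>" "pathstart \<alpha> = a" "pathfinish \<alpha> = b"
      "path_image \<alpha> = subarc (circlepath c r) a b" "path_image \<beta> = subarc (circlepath c r) b a"
    using jordan_curve_split[OF circle(1)] ab assms(7) circle(2) by metis
  have "sphere c r \<inter> outside (path_image g) = {}"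
    using cball_Int_outside[OF closed_path_image assms(3,4)] assms(1) sphere_cball
    by (auto simp: jordan_curve_def simple_path_imp_path)
  moreover have "path_image P \<inter> sphere c r \<subseteq> {a, b}"
    using P(4) assms(8) sphere_cball by blast
  moreover have "ball c r \<inter> (path_image P \<union> sphere c r) = {}"
    using P(1) ball_disjoint by (auto simp: arc_decomposition_def)
  ultimately have "ball c r \<subseteq> outside (path_image P \<union> path_image \<alpha>) \<and>
      ball c r \<subseteq> inside (path_image P \<union> path_image \<beta>)"
    using rerouted_curves_outside_inside[OF assms(1,2) P(1) \<alpha>\<beta>(1) _ _ _ _ connected_ball _
        centre_in_ball[THEN iffD2, OF assms(3)] winding_number_circlepath_centre[OF assms(3)]]
      P(2,3) \<alpha>\<beta>(2,3) circle(2) by simp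
  with P(4) \<alpha>\<beta>(4,5) show ?thesis
    by simp
qed

end
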